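(* Let $s\in(0,1)$ and let $\Omega\subset\mathbb{R}^d$ be a bounded Lipschitz domain satisfying the uniform exterior ball condition. Let $\{D_\varepsilon\}_{0<\varepsilon<\varepsilon_0}$ be a family of $C^\infty$-domains and $\lambda>1$ such that: (i) $D_\varepsilon\subset D_{\varepsilon'}\Subset\Omega$ for $0<\varepsilon'<\varepsilon<\varepsilon_0$ and $\bigcup_{0<\varepsilon<\varepsilon_0}D_\varepsilon=\Omega$; (ii) the $D_\varepsilon$ satisfy the uniform exterior ball condition with a radius independent of $\varepsilon$; (iii) $\varepsilon\le\mathrm{dist}(\partial D_\varepsilon,\partial\Omega)$ and $\sup\{\mathrm{dist}(x,\partial\Omega):x\in\partial D_\varepsilon\}\le\lambda\varepsilon$ for all $0<\varepsilon<\varepsilon_0$. Fix a nonnegative $\eta\in C_c^\infty(\mathbb{R}^d)$ with $\|\eta\|_{L^1}=1$ and $\mathrm{supp}\,\eta=\overline{B_1(0)}$, and set $\eta_\varepsilon=\varepsilon^{-d}\eta(\cdot/\varepsilon)$. Then there exists a constant $C>0$ such that $$\sup\Big\{\big(\mathrm{dist}(\cdot,\partial D_\varepsilon)^{-s}*\eta_\varepsilon\big)(x)\ :\ x\in\Omega,\ \mathrm{dist}(x,\partial\Omega)<(1+\lambda)\varepsilon\Big\}\le C\varepsilon^{-s}$$ for all $0<\varepsilon<\varepsilon_0$.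
   Context: Uniform exterior ball condition: there is $\rho>0$ such that for each $x\in\partial D$ there is a ball $B\subset\overline D^c$ of radius $\rho$ with $\overline B\cap\overline D=\{x\}$. $\mathrm{dist}(A,B)=\inf\{\mathrm{dist}(x,B):x\in A\}$. (Such families $\{D_\varepsilon\}$ exist for every bounded Lipschitz domain with the uniform exterior ball condition.) *)

theory Defs
  imports "HOL-Analysis.Analysis"
begin

fun Ck :: "nat \<Rightarrow> ('a::real_normed_vector \<Rightarrow> real) \<Rightarrow> bool" where
  "Ck 0 f = continuous_on UNIV f"
| "Ck (Suc k) f = (f differentiable_on UNIV \<and>
      (\<forall>v. Ck k (\<lambda>x. frechet_derivative f (at x) v)))"

definition smooth_fun :: "('a::real_normed_vector \<Rightarrow> real) \<Rightarrow> bool" where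
  "smooth_fun f \<longleftrightarrow> (\<forall>k. Ck k f)"

definition is_domain :: "'a::euclidean_space set \<Rightarrow> bool" where
  "is_domain U \<longleftrightarrow> open U \<and> connected U \<and> U \<noteq> {}"

text \<open>Boundary locally the subgraph of a function of the hyperplane coordinates
  orthogonal to a unit direction e (coordinate rotation).\<close>
definition lipschitz_domain :: "'a::euclidean_space set \<Rightarrow> bool" where
  "lipschitz_domain U \<longleftrightarrow> is_domain U \<and>
     (\<forall>x\<in>frontier U. \<exists>r>0. \<exists>e g L. norm e = 1 \<and> L-lipschitz_on UNIV g \<and>
        U \<inter> ball x r = {y \<in> ball x r. y \<bullet> e < g (y - (y \<bullet> e) *\<^sub>R e)})"

definition smooth_domain :: "'a::euclidean_space set \<Rightarrow> bool" where
  "smooth_domain U \<longleftrightarrow> is_domain U \<and>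
     (\<forall>x\<in>frontier U. \<exists>r>0. \<exists>e g. norm e = 1 \<and> smooth_fun g \<and>
        U \<inter> ball x r = {y \<in> ball x r. y \<bullet> e < g (y - (y \<bullet> e) *\<^sub>R e)})"

definition exterior_ball_radius :: "'a::euclidean_space set \<Rightarrow> real \<Rightarrow> bool" where
  "exterior_ball_radius U \<rho> \<longleftrightarrow>
     (\<forall>x\<in>frontier U. \<exists>c. ball c \<rho> \<subseteq> - closure U \<and> cball c \<rho> \<inter> closure U = {x})"

definition uniform_exterior_ball :: "'a::euclidean_space set \<Rightarrow> bool" where
  "uniform_exterior_ball U \<longleftrightarrow> (\<exists>\<rho>>0. exterior_ball_radius U \<rho>)"

definition compactly_contained :: "'a::euclidean_space set \<Rightarrow> 'a set \<Rightarrow> bool" where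
  "compactly_contained A B \<longleftrightarrow> compact (closure A) \<and> closure A \<subseteq> B"

end

theory Submission
  imports Defs
begin

text \<open>
  The mollifier is supported in \<open>B(x, \<epsilon>)\<close> and bounded there by \<open>sup \<eta> / \<epsilon>\<^sup>d\<close>, so it suffices to
  bound \<open>\<integral>\<^bsub>B(x,\<epsilon>)\<^esub> dist(y, \<partial>D)\<^sup>-\<^sup>s dy\<close> by \<open>C \<epsilon>\<^sup>d\<^sup>-\<^sup>s\<close> for every \<open>D = D \<epsilon>\<close>.
  Splitting the ball into the dyadic layers \<open>\<epsilon> / 2\<^sup>k\<^sup>+\<^sup>1 \<le> dist(y, \<partial>D) < \<epsilon> / 2\<^sup>k\<close>, this follows
  from the layer estimate \<open>|{y \<in> B(x, \<epsilon>). 0 < dist(y, \<partial>D) < r}| \<le> K r \<epsilon>\<^sup>d\<^sup>-\<^sup>1\<close>, where \<open>K\<close>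
  depends only on \<open>d\<close>, \<open>\<epsilon>0\<close> and the exterior ball radius \<open>\<rho>\<close>.

  For the layer estimate let \<open>c\<close> be the centre of the exterior ball touching \<open>\<partial>D\<close> at a nearest
  boundary point of \<open>y\<close>. If \<open>y \<in> D\<close> then \<open>\<rho> \<le> |y - c| < \<rho> + r\<close>; if \<open>y \<notin> D\<close> then \<open>y\<close> lies in
  that exterior ball, because at a smooth boundary point all touching exterior balls have collinear
  centres. For a signed coordinate direction \<open>e\<close> with \<open>(y - c) \<bullet> e > |y - c| / (2 d)\<close>, moving
  along \<open>e\<close> changes \<open>|\<cdot> - c|\<close> at a rate of at least \<open>1 / (4 d)\<close>. Hence each of the resulting \<open>4 d\<close>
  families of points meets every line in direction \<open>e\<close> only in gaps shorter than \<open>4 d r\<close>, and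
  disjoint translates bound its measure by \<open>O(r \<epsilon>\<^sup>d\<^sup>-\<^sup>1)\<close>.
\<close>

lemma emeasure_lborel_translation:
  fixes S :: "'a::euclidean_space set"
  assumes "S \<in> sets lborel"
  shows "(+) a ` S \<in> sets lborel" and "emeasure lborel ((+) a ` S) = emeasure lborel S"
proof -
  have image_eq: "(+) a ` S = (+) (- a) -` S"
    by (force simp: image_iff)
  show meas: "(+) a ` S \<in> sets lborel"
    unfolding image_eq using measurable_sets[OF _ assms, of "(+) (- a)" lborel] by simp
  have "emeasure lborel ((+) a ` S) = emeasure (distr lborel borel ((+) a)) ((+) a ` S)"
    by (simp add: lborel_distr_plus)
  also have "\<dots> = emeasure lborel ((+) a -` ((+) a ` S))"
    using meas by (subst emeasure_distr) auto
  finally show "emeasure lborel ((+) a ` S) = emeasure lborel S"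
    by (simp add: inj_vimage_image_eq)
qed

lemma emeasure_lborel_cball_le:
  fixes x :: "'a::euclidean_space"
  assumes "0 \<le> R"
  shows "emeasure lborel (cball x R) \<le> ennreal ((2 * R) ^ DIM('a))"
proof -
  have "cball x R \<subseteq> cbox (x - R *\<^sub>R One) (x + R *\<^sub>R One)"
  proof
    fix y assume "y \<in> cball x R"
    then have "\<bar>(y - x) \<bullet> b\<bar> \<le> R" if "b \<in> Basis" for b
      using Basis_le_norm[OF that, of "y - x"] by (simp add: dist_norm norm_minus_commute)
    then show "y \<in> cbox (x - R *\<^sub>R One) (x + R *\<^sub>R One)"
      by (auto simp: mem_box inner_diff_left abs_le_iff algebra_simps)
  qed
  then have "emeasure lborel (cball x R) \<le> emeasure lborel (cbox (x - R *\<^sub>R One) (x + R *\<^sub>R One))"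
    by (intro emeasure_mono) auto
  also have "\<dots> = ennreal ((2 * R) ^ DIM('a))"
    using assms by (simp add: emeasure_lborel_cbox_eq inner_add_left inner_diff_left algebra_simps)
  finally show ?thesis .
qed

lemma emeasure_le_of_disjoint_translates:
  fixes S :: "'a::euclidean_space set"
  assumes S: "S \<in> sets lborel" and K: "finite K"
    and disj: "disjoint_family_on (\<lambda>k. (+) (a k) ` S) K"
    and sub: "(\<Union>k\<in>K. (+) (a k) ` S) \<subseteq> B" and B: "B \<in> sets lborel"
  shows "of_nat (card K) * emeasure lborel S \<le> emeasure lborel B"
proof -
  have "of_nat (card K) * emeasure lborel S = (\<Sum>k\<in>K. emeasure lborel ((+) (a k) ` S))"
    by (simp add: emeasure_lborel_translation[OF S])
  also have "\<dots> = emeasure lborel (\<Union>k\<in>K. (+) (a k) ` S)"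
    using K disj emeasure_lborel_translation(1)[OF S] by (intro sum_emeasure) auto
  also have "\<dots> \<le> emeasure lborel B"
    using sub B by (intro emeasure_mono)
  finally show ?thesis .
qed

lemma disjoint_translates_of_short_gaps:
  fixes S :: "'a::real_normed_vector set"
  assumes L: "0 < L" "real N * L \<le> M"
    and gaps: "\<And>y \<tau>. y \<in> S \<Longrightarrow> y + \<tau> *\<^sub>R e \<in> S \<Longrightarrow> 0 < \<tau> \<Longrightarrow> \<tau> \<le> M \<Longrightarrow> \<tau> < L"
  shows "disjoint_family_on (\<lambda>k. (+) ((real k * L) *\<^sub>R e) ` S) {..<N}"
proof -
  have "(+) ((real i * L) *\<^sub>R e) ` S \<inter> (+) ((real j * L) *\<^sub>R e) ` S = {}" if "i < j" "j < N" for i j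
  proof (rule ccontr)
    assume "(+) ((real i * L) *\<^sub>R e) ` S \<inter> (+) ((real j * L) *\<^sub>R e) ` S \<noteq> {}"
    then obtain y z where "y \<in> S" "z \<in> S" "(real i * L) *\<^sub>R e + y = (real j * L) *\<^sub>R e + z"
      by auto
    moreover have "y = z + ((real j * L) *\<^sub>R e - (real i * L) *\<^sub>R e)"
      using \<open>_ + y = _ + z\<close> by (simp add: algebra_simps)
    moreover have "(real j * L) *\<^sub>R e - (real i * L) *\<^sub>R e = (real (j - i) * L) *\<^sub>R e"
      using \<open>i < j\<close> by (simp add: of_nat_diff algebra_simps)
    ultimately have "z + (real (j - i) * L) *\<^sub>R e \<in> S"
      by simp
    moreover have "real (j - i) * L \<le> real N * L"
      using L \<open>j < N\<close> by (intro mult_right_mono) auto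
    then have "real (j - i) * L \<le> M"
      using L by linarith
    ultimately have "real (j - i) * L < L"
      using gaps[OF \<open>z \<in> S\<close>] \<open>i < j\<close> L by simp
    then show False
      using \<open>i < j\<close> L by simp
  qed
  then show ?thesis
    unfolding disjoint_family_on_def by (metis Int_commute linorder_neqE_nat lessThan_iff)
qed

text \<open>The translates of \<open>S\<close> by \<open>k L e\<close>, \<open>k < M / L\<close>, are pairwise disjoint and lie in a ball of
  twice the radius.\<close>
lemma emeasure_le_of_short_gaps:
  fixes S :: "'a::euclidean_space set"
  assumes S: "S \<in> sets lborel" "S \<subseteq> cball x R"
    and e: "norm e = 1" and LM: "0 < L" "L \<le> M" "M \<le> R"
    and gaps: "\<And>y \<tau>. y \<in> S \<Longrightarrow> y + \<tau> *\<^sub>R e \<in> S \<Longrightarrow> 0 < \<tau> \<Longrightarrow> \<tau> \<le> M \<Longrightarrow> \<tau> < L"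
  shows "emeasure lborel S \<le> ennreal (2 * L / M * (4 * R) ^ DIM('a))"
proof -
  define N where "N = nat \<lfloor>M / L\<rfloor>"
  have "1 \<le> M / L" using LM by simp
  then have N1: "1 \<le> real N" and "real N \<le> M / L" "M / L < real N + 1"
    using floor_correct[of "M / L"] unfolding N_def by (auto simp: le_floor_iff)
  then have NL: "real N * L \<le> M" and "M < real N * L + L"
    using LM by (simp_all add: field_simps)
  moreover have "L \<le> real N * L"
    using N1 LM by simp
  ultimately have MNL: "M \<le> 2 * real N * L"
    by linarith
  have "(\<Union>k\<in>{..<N}. (+) ((real k * L) *\<^sub>R e) ` S) \<subseteq> cball x (2 * R)"
  proof clarify
    fix k y assume "k < N" "y \<in> S"
    have "dist y ((real k * L) *\<^sub>R e + y) = real k * L"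
      using e LM by (simp add: dist_norm)
    then have "dist x ((real k * L) *\<^sub>R e + y) \<le> dist x y + real k * L"
      using dist_triangle[of x "(real k * L) *\<^sub>R e + y" y] by simp
    moreover have "real k * L \<le> real N * L"
      using LM \<open>k < N\<close> by (intro mult_right_mono) auto
    moreover have "dist x y \<le> R"
      using S \<open>y \<in> S\<close> by auto
    ultimately show "(real k * L) *\<^sub>R e + y \<in> cball x (2 * R)"
      unfolding mem_cball using LM NL by linarith
  qed
  then have "of_nat N * emeasure lborel S \<le> emeasure lborel (cball x (2 * R))"
    using emeasure_le_of_disjoint_translates[OF S(1) _ disjoint_translates_of_short_gaps[OF LM(1) NL gaps]]
    by simp
  also have "\<dots> \<le> ennreal ((4 * R) ^ DIM('a))"
    using emeasure_lborel_cball_le[of "2 * R" x] LM by simp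
  finally have "of_nat N * emeasure lborel S \<le> ennreal ((4 * R) ^ DIM('a))" .
  moreover have fin: "emeasure lborel S \<noteq> \<infinity>"
    using emeasure_mono[OF S(2), of lborel] emeasure_lborel_cball_finite[of x R] by auto
  ultimately have "real N * measure lborel S \<le> (4 * R) ^ DIM('a)"
    using LM by (simp add: emeasure_eq_ennreal_measure ennreal_of_nat_eq_real_of_nat ennreal_mult'[symmetric])
  then have "measure lborel S \<le> (4 * R) ^ DIM('a) * (1 / real N)"
    using N1 by (simp add: field_simps)
  also have "\<dots> \<le> (4 * R) ^ DIM('a) * (2 * L / M)"
    using N1 MNL LM by (intro mult_left_mono) (simp_all add: field_simps)
  finally show ?thesis
    using fin by (simp add: emeasure_eq_ennreal_measure ennreal_leI mult.commute)
qed

lemma emeasure_UN_le_card_mult: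
  assumes "finite I" "\<And>i. i \<in> I \<Longrightarrow> S i \<in> sets M" "\<And>i. i \<in> I \<Longrightarrow> emeasure M (S i) \<le> ennreal B"
    and "0 \<le> B"
  shows "emeasure M (\<Union>i\<in>I. S i) \<le> ennreal (real (card I) * B)"
proof -
  have "emeasure M (\<Union>i\<in>I. S i) \<le> (\<Sum>i\<in>I. emeasure M (S i))"
    using assms(1,2) by (intro emeasure_subadditive_finite) auto
  also have "\<dots> \<le> (\<Sum>i\<in>I. ennreal B)"
    using assms(3) by (intro sum_mono)
  also have "\<dots> = ennreal (real (card I) * B)"
    using \<open>0 \<le> B\<close> by (simp add: ennreal_mult ennreal_of_nat_eq_real_of_nat)
  finally show ?thesis .
qed

lemma emeasure_lborel_cball_le_of_radius_le:
  fixes x :: "'a::euclidean_space"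
  assumes "0 < \<epsilon>" "\<epsilon> \<le> a"
  shows "emeasure lborel (cball x \<epsilon>) \<le> ennreal (2 ^ DIM('a) * a * \<epsilon> ^ (DIM('a) - 1))"
proof -
  have "(2 * \<epsilon>) ^ DIM('a) = 2 ^ DIM('a) * \<epsilon> * \<epsilon> ^ (DIM('a) - 1)"
    by (simp add: power_mult_distrib power_eq_if[of \<epsilon> "DIM('a)"])
  also have "\<dots> \<le> 2 ^ DIM('a) * a * \<epsilon> ^ (DIM('a) - 1)"
    using assms by (intro mult_right_mono mult_left_mono) auto
  finally show ?thesis
    using emeasure_lborel_cball_le[of \<epsilon> x] assms(1) by (simp add: ennreal_leI order_trans)
qed

lemma exists_signed_basis_inner_gt:
  fixes v :: "'a::euclidean_space"
  assumes "v \<noteq> 0" and \<kappa>: "\<kappa> \<le> 1 / (2 * DIM('a))"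
  shows "\<exists>e\<in>Basis \<union> uminus ` Basis. \<kappa> * norm v < v \<bullet> e"
proof (rule ccontr)
  assume "\<not> ?thesis"
  then have contra: "v \<bullet> e \<le> \<kappa> * norm v" if "e \<in> Basis \<union> uminus ` Basis" for e
    using that by (auto simp: not_less)
  have "\<bar>v \<bullet> b\<bar> \<le> norm v / (2 * DIM('a))" if "b \<in> Basis" for b
  proof -
    have "\<kappa> * norm v \<le> norm v / (2 * DIM('a))"
      using mult_right_mono[OF \<kappa>, of "norm v"] by simp
    then show ?thesis
      using contra[of b] contra[of "- b"] that by (auto simp: abs_le_iff)
  qed
  have "norm v \<le> (\<Sum>b\<in>Basis. \<bar>v \<bullet> b\<bar>)"
    by (rule norm_le_l1)
  also have "\<dots> \<le> (\<Sum>b\<in>(Basis::'a set). norm v / (2 * DIM('a)))"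
    by (intro sum_mono) fact
  also have "\<dots> = norm v / 2"
    by simp
  finally show False
    using assms(1) by simp
qed

lemma norm_diff_scaleR_lt:
  fixes u e :: "'a::real_inner"
  assumes e: "norm e = 1" and \<kappa>: "0 < \<kappa>" "\<kappa> \<le> 1" and \<tau>: "0 < \<tau>" "\<tau> \<le> \<kappa> * norm u"
    and cone: "\<kappa> * norm u < u \<bullet> e"
  shows "norm (u - \<tau> *\<^sub>R e) < norm u - \<tau> * \<kappa> / 2"
proof -
  have "e \<bullet> e = 1"
    using e by (simp add: norm_eq_1)
  then have "(norm (u - \<tau> *\<^sub>R e))\<^sup>2 = (norm u)\<^sup>2 - 2 * \<tau> * (u \<bullet> e) + \<tau>\<^sup>2"
    unfolding power2_norm_eq_inner
    by (simp add: inner_diff_left inner_diff_right inner_commute[of e u] power2_eq_square algebra_simps)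
  also have "\<dots> < (norm u)\<^sup>2 - \<tau> * (\<kappa> * norm u)"
  proof -
    have "\<tau> * (\<kappa> * norm u) < \<tau> * (u \<bullet> e)" "\<tau>\<^sup>2 \<le> \<tau> * (\<kappa> * norm u)"
      using cone \<tau> by (simp_all add: power2_eq_square)
    then show ?thesis
      by linarith
  qed
  also have "\<dots> \<le> (norm u - \<tau> * \<kappa> / 2)\<^sup>2"
  proof -
    have "(norm u - \<tau> * \<kappa> / 2)\<^sup>2 = (norm u)\<^sup>2 - \<tau> * (\<kappa> * norm u) + (\<tau> * \<kappa> / 2)\<^sup>2"
      by (simp add: power2_eq_square algebra_simps)
    then show ?thesis
      using zero_le_power2[of "\<tau> * \<kappa> / 2"] by linarith
  qed
  finally have "(norm (u - \<tau> *\<^sub>R e))\<^sup>2 < (norm u - \<tau> * \<kappa> / 2)\<^sup>2" .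
  moreover have "0 \<le> norm u - \<tau> * \<kappa> / 2"
  proof -
    have "\<tau> * \<kappa> \<le> \<tau>" "\<kappa> * norm u \<le> norm u"
      using \<tau> \<kappa> by (simp_all add: mult_left_le mult_left_le_one_le)
    then show ?thesis
      using \<tau> by linarith
  qed
  ultimately show ?thesis
    by (rule power2_less_imp_less)
qed

lemma inner_eq_of_nonpos_on_halfspace:
  fixes w e :: "'a::real_inner"
  assumes l: "linear l" "l e = -1" and nonpos: "\<And>v. 0 < l v \<Longrightarrow> w \<bullet> v \<le> 0"
  shows "w \<bullet> v = - l v * (w \<bullet> e)" and "0 \<le> w \<bullet> e"
proof -
  interpret l: linear l by (fact l(1))
  show we: "0 \<le> w \<bullet> e"
    using nonpos[of "- e"] l by (simp add: l.neg)
  define u where "u = v + l v *\<^sub>R e"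
  have "l u = 0"
    using l by (simp add: u_def l.add l.scale)
  have small: "\<bar>w \<bullet> u\<bar> \<le> \<delta> * (w \<bullet> e)" if "0 < \<delta>" for \<delta>
  proof -
    have "l (u - \<delta> *\<^sub>R e) = \<delta>" "l (- u - \<delta> *\<^sub>R e) = \<delta>"
      using \<open>l u = 0\<close> l by (simp_all add: l.diff l.neg l.scale)
    then show ?thesis
      using nonpos[of "u - \<delta> *\<^sub>R e"] nonpos[of "- u - \<delta> *\<^sub>R e"] that
      by (simp add: inner_diff_right abs_le_iff)
  qed
  have "\<bar>w \<bullet> u\<bar> \<le> 0 + \<epsilon>" if "0 < \<epsilon>" for \<epsilon>
  proof -
    have "\<bar>w \<bullet> u\<bar> \<le> \<epsilon> / (w \<bullet> e + 1) * (w \<bullet> e)"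
      using small[of "\<epsilon> / (w \<bullet> e + 1)"] that we by simp
    also have "\<dots> \<le> \<epsilon>"
      using that we by (simp add: field_simps)
    finally show ?thesis by simp
  qed
  then have "\<bar>w \<bullet> u\<bar> \<le> 0"
    by (rule field_le_epsilon)
  then have "w \<bullet> u = 0"
    by simp
  then show "w \<bullet> v = - l v * (w \<bullet> e)"
    by (simp add: u_def inner_add_right)
qed

lemma smooth_fun_continuous: "smooth_fun g \<Longrightarrow> continuous_on UNIV g"
  unfolding smooth_fun_def by (metis Ck.simps(1))

lemma smooth_fun_differentiable: "smooth_fun g \<Longrightarrow> g differentiable (at z)"
  unfolding smooth_fun_def by (metis Ck.simps(2) UNIV_I differentiable_on_def)

lemma smooth_domain_local_defining_function:
  fixes D :: "'a::euclidean_space set"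
  assumes "smooth_domain D" "p \<in> frontier D"
  obtains F :: "'a \<Rightarrow> real" and F' e r where "(F has_derivative F') (at p)" "0 \<le> F p" "F' e = -1" "0 < r"
    "\<And>y. y \<in> ball p r \<Longrightarrow> 0 < F y \<Longrightarrow> y \<in> D"
proof -
  obtain r e g where r: "0 < r" and e: "norm e = 1" and g: "smooth_fun g"
    and loc: "D \<inter> ball p r = {y \<in> ball p r. y \<bullet> e < g (y - (y \<bullet> e) *\<^sub>R e)}"
    using assms unfolding smooth_domain_def by blast
  define P where "P y = y - (y \<bullet> e) *\<^sub>R e" for y
  define F where "F y = g (P y) - y \<bullet> e" for y
  obtain g' where g': "(g has_derivative g') (at (P p))"
    using smooth_fun_differentiable[OF g] unfolding differentiable_def by blast
  have "(P has_derivative P) (at p)"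
    unfolding P_def[abs_def] by (auto intro!: derivative_eq_intros)
  from has_derivative_compose[OF this g']
  have F': "(F has_derivative (\<lambda>v. g' (P v) - v \<bullet> e)) (at p)"
    unfolding F_def[abs_def] by (auto intro!: derivative_eq_intros)
  have "P e = 0"
    using e by (simp add: P_def norm_eq_1)
  moreover have "g' 0 = 0"
    using g' by (simp add: has_derivative_bounded_linear linear_simps(3) bounded_linear.linear)
  ultimately have F'e: "g' (P e) - e \<bullet> e = -1"
    using e by (simp add: norm_eq_1)
  have in_D: "y \<in> D" if "y \<in> ball p r" "0 < F y" for y
    using that loc by (auto simp: F_def P_def)
  have "continuous_on UNIV (\<lambda>y. g (P y))"
    unfolding P_def by (intro continuous_on_compose2[OF smooth_fun_continuous[OF g]] continuous_intros) auto
  then have "continuous_on UNIV F"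
    unfolding F_def by (intro continuous_intros)
  then have "closed {y. 0 \<le> F y}"
    by (simp add: closed_Collect_le continuous_on_const)
  moreover have "ball p r \<inter> D \<subseteq> {y. 0 \<le> F y}"
  proof
    fix y assume "y \<in> ball p r \<inter> D"
    then have "y \<bullet> e < g (y - (y \<bullet> e) *\<^sub>R e)"
      using loc by blast
    then show "y \<in> {y. 0 \<le> F y}"
      by (simp add: F_def P_def)
  qed
  ultimately have "closure (ball p r \<inter> D) \<subseteq> {y. 0 \<le> F y}"
    by (simp add: closure_minimal)
  moreover have "p \<in> closure (ball p r \<inter> D)"
    using open_Int_closure_subset[of "ball p r" D] assms(2) r by (auto simp: frontier_def)
  ultimately have "0 \<le> F p"
    by blast
  then show thesis
    using that[of F "\<lambda>v. g' (P v) - v \<bullet> e" e r] F' F'e r in_D by blast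
qed

lemma eventually_pos_along_direction:
  fixes F :: "'a::real_normed_vector \<Rightarrow> real"
  assumes F: "(F has_derivative F') (at p)" "0 \<le> F p" and v: "0 < F' v"
  shows "\<forall>\<^sub>F h in at_right 0. 0 < F (p + h *\<^sub>R v)"
proof -
  have "((\<lambda>t. p + t *\<^sub>R v) has_derivative (\<lambda>t. t *\<^sub>R v)) (at 0)"
    by (auto intro!: derivative_eq_intros)
  moreover have "(F has_derivative F') (at (p + 0 *\<^sub>R v))"
    using F(1) by simp
  ultimately have "((\<lambda>t. F (p + t *\<^sub>R v)) has_derivative (\<lambda>t. F' (t *\<^sub>R v))) (at 0)"
    by (rule has_derivative_compose)
  moreover have "(\<lambda>t. F' (t *\<^sub>R v)) = (*) (F' v)"
    using has_derivative_bounded_linear[OF F(1)]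
    by (auto simp: linear_simps(5) bounded_linear.linear mult.commute)
  ultimately have "((\<lambda>t. F (p + t *\<^sub>R v)) has_real_derivative F' v) (at 0)"
    by (simp add: has_field_derivative_def)
  from DERIV_pos_inc_right[OF this v] show ?thesis
    using F(2) unfolding eventually_at_right_field by force
qed

lemma eventually_in_ball_along_direction:
  fixes p q v :: "'a::real_inner"
  assumes "dist q p = R" "0 < (q - p) \<bullet> v"
  shows "\<forall>\<^sub>F h in at_right 0. dist q (p + h *\<^sub>R v) < R"
proof -
  define w where "w = q - p"
  have "((\<lambda>h. h * (norm v)\<^sup>2) \<longlongrightarrow> 0) (at_right (0::real))"
    by (intro tendsto_eq_intros) auto
  from order_tendstoD(2)[OF this, of "2 * (w \<bullet> v)"]
  have "\<forall>\<^sub>F h in at_right 0. 0 < h \<and> h * (norm v)\<^sup>2 < 2 * (w \<bullet> v)"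
    using assms(2) by (simp add: w_def eventually_conj eventually_at_right_less)
  moreover have dist_sq: "(dist q (p + h *\<^sub>R v))\<^sup>2 = R\<^sup>2 - h * (2 * (w \<bullet> v) - h * (norm v)\<^sup>2)" for h
  proof -
    have "dist q (p + h *\<^sub>R v) = norm (w - h *\<^sub>R v)" "R = norm w"
      using assms(1) by (simp_all add: w_def dist_norm algebra_simps)
    moreover have "(norm (w - h *\<^sub>R v))\<^sup>2 = (norm w)\<^sup>2 - h * (2 * (w \<bullet> v) - h * (norm v)\<^sup>2)"
      unfolding power2_norm_eq_inner
      by (simp add: inner_diff_left inner_diff_right inner_commute[of v w] power2_eq_square algebra_simps)
    ultimately show ?thesis
      by simp
  qed
  ultimately show ?thesis
  proof (elim eventually_mono)
    fix h assume "0 < h \<and> h * (norm v)\<^sup>2 < 2 * (w \<bullet> v)"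
    then have "0 < h * (2 * (w \<bullet> v) - h * (norm v)\<^sup>2)"
      by simp
    then have "(dist q (p + h *\<^sub>R v))\<^sup>2 < R\<^sup>2"
      using dist_sq[of h] by linarith
    moreover have "0 \<le> R"
      using assms(1) zero_le_dist[of q p] by linarith
    ultimately show "dist q (p + h *\<^sub>R v) < R"
      by (rule power2_less_imp_less)
  qed
qed

lemma touching_ball_inner_nonpos:
  fixes F :: "'a::real_inner \<Rightarrow> real"
  assumes F: "(F has_derivative F') (at p)" "0 \<le> F p"
    and in_D: "\<And>y. y \<in> ball p r \<Longrightarrow> 0 < F y \<Longrightarrow> y \<in> D" and "0 < r"
    and touch: "dist q p = R" "ball q R \<inter> D = {}"
    and v: "0 < F' v"
  shows "(q - p) \<bullet> v \<le> 0"
proof (rule ccontr)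
  assume "\<not> (q - p) \<bullet> v \<le> 0"
  then have "\<forall>\<^sub>F h in at_right 0. dist q (p + h *\<^sub>R v) < R"
    using eventually_in_ball_along_direction[OF touch(1)] by simp
  moreover have "\<forall>\<^sub>F h in at_right 0. p + h *\<^sub>R v \<in> ball p r"
  proof -
    have "((\<lambda>h. p + h *\<^sub>R v) \<longlongrightarrow> p) (at_right (0::real))"
      by (intro tendsto_eq_intros) auto
    from topological_tendstoD[OF this open_ball[of p r]] show ?thesis
      using \<open>0 < r\<close> by simp
  qed
  moreover note eventually_pos_along_direction[OF F v]
  ultimately have "\<forall>\<^sub>F h in at_right 0. dist q (p + h *\<^sub>R v) < R \<and> p + h *\<^sub>R v \<in> ball p r \<and> 0 < F (p + h *\<^sub>R v)"
    by (simp add: eventually_conj_iff)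
  then obtain h where h: "dist q (p + h *\<^sub>R v) < R" "p + h *\<^sub>R v \<in> ball p r" "0 < F (p + h *\<^sub>R v)"
    using eventually_happens'[OF trivial_limit_at_right_real] by blast
  then have "p + h *\<^sub>R v \<in> D \<inter> ball q R"
    using in_D by simp
  then show False
    using touch(2) by blast
qed


lemma smooth_domain_touching_balls_collinear:
  fixes D :: "'a::euclidean_space set"
  assumes D: "smooth_domain D" "p \<in> frontier D"
    and ball1: "dist q1 p = R1" "0 < R1" "ball q1 R1 \<inter> D = {}"
    and ball2: "dist q2 p = R2" "ball q2 R2 \<inter> D = {}"
  shows "q2 - p = (R2 / R1) *\<^sub>R (q1 - p)"
proof -
  obtain F :: "'a \<Rightarrow> real" and F' e r where F: "(F has_derivative F') (at p)" "0 \<le> F p"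
    and F'e: "F' e = -1" and r: "0 < r" and in_D: "\<And>y. y \<in> ball p r \<Longrightarrow> 0 < F y \<Longrightarrow> y \<in> D"
    using smooth_domain_local_defining_function[OF D] by blast
  have "linear F'"
    using has_derivative_bounded_linear[OF F(1)] bounded_linear.linear by blast
  have normal: "(q - p) \<bullet> v = - F' v * ((q - p) \<bullet> e)" "0 \<le> (q - p) \<bullet> e"
    if "dist q p = R" "ball q R \<inter> D = {}" for q R v
    using inner_eq_of_nonpos_on_halfspace[OF \<open>linear F'\<close> F'e touching_ball_inner_nonpos[OF F in_D r that]]
    by blast+
  define w1 w2 where "w1 = q1 - p" and "w2 = q2 - p"
  have "w1 \<noteq> 0"
    using ball1 by (auto simp: w1_def)
  then have "w1 \<bullet> e \<noteq> 0"
    using normal(1)[OF ball1(1,3), of w1] by (auto simp: w1_def)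
  then have w1e: "0 < w1 \<bullet> e"
    using normal(2)[OF ball1(1,3)] by (simp add: w1_def)
  define \<mu> where "\<mu> = (w2 \<bullet> e) / (w1 \<bullet> e)"
  have "(w2 - \<mu> *\<^sub>R w1) \<bullet> v = 0" for v
    using normal(1)[OF ball1(1,3), of v] normal(1)[OF ball2, of v] w1e
    by (simp add: w1_def w2_def \<mu>_def inner_diff_left)
  then have w2: "w2 = \<mu> *\<^sub>R w1"
    using inner_eq_zero_iff[of "w2 - \<mu> *\<^sub>R w1"] by simp
  have "0 \<le> \<mu>"
    using normal(2)[OF ball2] w1e by (simp add: \<mu>_def w2_def)
  moreover have "R1 = norm w1" "R2 = norm w2"
    using ball1(1) ball2(1) by (simp_all add: w1_def w2_def dist_norm norm_minus_commute)
  ultimately have "R2 = \<mu> * R1"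
    using w2 by simp
  then show ?thesis
    using w2 ball1(2) by (simp add: w1_def w2_def)
qed

lemma ball_infdist_frontier_disjoint:
  fixes D :: "'a::real_normed_vector set"
  assumes "y \<notin> D"
  shows "ball y (infdist y (frontier D)) \<inter> D = {}"
proof (rule ccontr)
  assume meets: "ball y (infdist y (frontier D)) \<inter> D \<noteq> {}"
  then obtain x where "dist y x < infdist y (frontier D)"
    by auto
  then have "0 < infdist y (frontier D)"
    using zero_le_dist[of y x] by linarith
  then have "y \<in> ball y (infdist y (frontier D))"
    by simp
  then have "ball y (infdist y (frontier D)) - D \<noteq> {}"
    using assms by blast
  with meets obtain f where "f \<in> ball y (infdist y (frontier D))" "f \<in> frontier D"
    using connected_Int_frontier[OF connected_ball] by (meson disjoint_iff)
  then show False
    using infdist_le[of f "frontier D" y] by simp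
qed

lemma infdist_frontier_ge:
  assumes "ball c \<rho> \<inter> D = {}" "frontier D \<noteq> {}"
  shows "\<rho> - dist z c \<le> infdist z (frontier D)"
proof -
  have "ball c \<rho> \<inter> closure D = {}"
    using assms(1) open_Int_closure_eq_empty[of "ball c \<rho>" D] by simp
  then have "\<rho> - dist z c \<le> dist z f" if "f \<in> frontier D" for f
    using that dist_triangle[of c f z] by (force simp: frontier_def dist_commute)
  then show ?thesis
    unfolding infdist_notempty[OF assms(2)] using assms(2) by (intro cINF_greatest) auto
qed

lemma exterior_ball_at_nearest_point:
  assumes "exterior_ball_radius D \<rho>" "frontier D \<noteq> {}"
  obtains p c where "p \<in> frontier D" "dist y p = infdist y (frontier D)"
    "ball c \<rho> \<inter> D = {}" "dist c p = \<rho>"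
proof -
  obtain p where p: "p \<in> frontier D" "infdist y (frontier D) = dist y p"
    using infdist_attains_inf[OF frontier_closed assms(2)] by blast
  obtain c where c: "ball c \<rho> \<subseteq> - closure D" "cball c \<rho> \<inter> closure D = {p}"
    using assms(1) p(1) unfolding exterior_ball_radius_def by blast
  have "p \<in> closure D"
    using p(1) by (simp add: frontier_def)
  then have "p \<in> cball c \<rho>" "p \<notin> ball c \<rho>"
    using c by auto
  then have "dist c p = \<rho>"
    by simp
  moreover have "ball c \<rho> \<inter> D = {}"
    using c(1) closure_subset by blast
  ultimately show thesis
    using that p by simp
qed

lemma exterior_ball_containing_outside_point:
  fixes D :: "'a::euclidean_space set"
  assumes D: "smooth_domain D" "exterior_ball_radius D \<rho>" "0 < \<rho>"
    and y: "y \<notin> D" "0 < infdist y (frontier D)" "infdist y (frontier D) < \<rho>"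
  obtains c where "ball c \<rho> \<inter> D = {}" "dist y c = \<rho> - infdist y (frontier D)"
proof -
  define d where "d = infdist y (frontier D)"
  have "frontier D \<noteq> {}"
    using y by (auto simp: infdist_def)
  then obtain p c where p: "p \<in> frontier D" "dist y p = d" and c: "ball c \<rho> \<inter> D = {}" "dist c p = \<rho>"
    using exterior_ball_at_nearest_point[OF D(2)] unfolding d_def by metis
  have "y - p = (d / \<rho>) *\<^sub>R (c - p)"
    using smooth_domain_touching_balls_collinear[OF D(1) p(1) c(2) D(3) c(1) p(2)]
      ball_infdist_frontier_disjoint[OF y(1)] by (simp add: d_def)
  then have "c - y = (1 - d / \<rho>) *\<^sub>R (c - p)"
    by (simp add: algebra_simps)
  moreover have "0 < 1 - d / \<rho>"
    using y D(3) by (simp add: d_def)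
  ultimately have "dist y c = (1 - d / \<rho>) * \<rho>"
    using c(2) by (simp add: dist_norm norm_minus_commute dist_commute)
  also have "\<dots> = \<rho> - d"
    using D(3) by (simp add: field_simps)
  finally show thesis
    using that c(1) by (simp add: d_def)
qed

definition exterior_centres :: "'a::metric_space set \<Rightarrow> real \<Rightarrow> 'a set" where
  "exterior_centres D \<rho> = {c. ball c \<rho> \<inter> D = {}}"

definition circ_cone :: "real \<Rightarrow> 'a::real_inner \<Rightarrow> 'a \<Rightarrow> 'a set" where
  "circ_cone \<kappa> c e = {y. \<kappa> * norm (y - c) < (y - c) \<bullet> e}"

definition inner_cone_layer :: "'a::real_inner set \<Rightarrow> real \<Rightarrow> real \<Rightarrow> real \<Rightarrow> 'a \<Rightarrow> 'a set" where
  "inner_cone_layer D \<rho> r \<kappa> e = D \<inter> (\<Union>c\<in>exterior_centres D \<rho>. ball c (\<rho> + r) \<inter> circ_cone \<kappa> c e)"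

definition outer_cone_layer :: "'a::real_inner set \<Rightarrow> real \<Rightarrow> real \<Rightarrow> real \<Rightarrow> 'a \<Rightarrow> 'a set" where
  "outer_cone_layer D \<rho> r \<kappa> e = {y. 0 < infdist y (frontier D) \<and> infdist y (frontier D) < r}
     \<inter> (\<Union>c\<in>exterior_centres D \<rho>. ball c \<rho> \<inter> circ_cone \<kappa> c (- e))"

lemma open_circ_cone: "open (circ_cone \<kappa> c e)"
  unfolding circ_cone_def by (intro open_Collect_less continuous_intros)

lemma open_inner_cone_layer: "open D \<Longrightarrow> open (inner_cone_layer D \<rho> r \<kappa> e)"
  unfolding inner_cone_layer_def by (intro open_Int open_UN ballI open_ball open_circ_cone)

lemma open_outer_cone_layer: "open (outer_cone_layer D \<rho> r \<kappa> e)"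
  unfolding outer_cone_layer_def
  by (intro open_Int open_UN ballI open_ball open_circ_cone open_Collect_conj open_Collect_less
      continuous_intros)

lemma inner_cone_layer_short_gaps:
  fixes D :: "'a::real_inner set"
  assumes e: "norm e = 1" and \<kappa>: "0 < \<kappa>" "\<kappa> \<le> 1" and \<tau>: "0 < \<tau>" "\<tau> \<le> \<kappa> * \<rho> / 2"
    and y: "y \<in> inner_cone_layer D \<rho> r \<kappa> e" "y + \<tau> *\<^sub>R e \<in> inner_cone_layer D \<rho> r \<kappa> e"
  shows "\<tau> * \<kappa> < 2 * r"
proof -
  obtain c where c: "c \<in> exterior_centres D \<rho>" "y + \<tau> *\<^sub>R e \<in> ball c (\<rho> + r) \<inter> circ_cone \<kappa> c e"
    using y(2) by (auto simp: inner_cone_layer_def)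
  have yD: "y \<in> D" "y + \<tau> *\<^sub>R e \<in> D"
    using y by (simp_all add: inner_cone_layer_def)
  define u where "u = y + \<tau> *\<^sub>R e - c"
  have outside: "\<rho> \<le> norm (z - c)" if "z \<in> D" for z
    using c(1) that by (force simp: exterior_centres_def dist_norm norm_minus_commute)
  have "0 < \<kappa> * \<rho>"
    using \<tau> by linarith
  then have "0 < \<rho>"
    using \<kappa> by (simp add: zero_less_mult_iff)
  moreover have "\<rho> \<le> norm u"
    using outside[OF yD(2)] by (simp add: u_def)
  ultimately have "\<rho> / 2 \<le> norm u"
    by linarith
  then have "\<kappa> * (\<rho> / 2) \<le> \<kappa> * norm u"
    using \<kappa> by (intro mult_left_mono) auto
  then have "\<tau> \<le> \<kappa> * norm u"
    using \<tau>(2) by (simp add: mult.assoc)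
  moreover have "\<kappa> * norm u < u \<bullet> e" "norm u < \<rho> + r"
    using c(2) by (auto simp: u_def circ_cone_def dist_norm norm_minus_commute)
  ultimately have "norm (u - \<tau> *\<^sub>R e) < norm u - \<tau> * \<kappa> / 2"
    using norm_diff_scaleR_lt[OF e \<kappa> \<tau>(1)] by blast
  then have "norm (y - c) < norm u - \<tau> * \<kappa> / 2"
    by (simp add: u_def)
  then show ?thesis
    using outside[OF yD(1)] \<open>norm u < \<rho> + r\<close> by linarith
qed

lemma outer_cone_layer_short_gaps:
  fixes D :: "'a::real_inner set"
  assumes e: "norm e = 1" and \<kappa>: "0 < \<kappa>" "\<kappa> \<le> 1" and \<tau>: "0 < \<tau>" "\<tau> \<le> \<kappa> * \<rho> / 2"
    and r: "r \<le> \<rho> / 2"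
    and y: "y \<in> outer_cone_layer D \<rho> r \<kappa> e" "y + \<tau> *\<^sub>R e \<in> outer_cone_layer D \<rho> r \<kappa> e"
  shows "\<tau> * \<kappa> < 2 * r"
proof -
  obtain c where c: "ball c \<rho> \<inter> D = {}" "y \<in> ball c \<rho> \<inter> circ_cone \<kappa> c (- e)"
    using y(1) by (auto simp: outer_cone_layer_def exterior_centres_def)
  have D: "frontier D \<noteq> {}"
    using y(1) by (auto simp: outer_cone_layer_def infdist_def)
  define u where "u = c - y"
  have "\<rho> - norm u < r"
    using infdist_frontier_ge[OF c(1) D, of y] y(1)
    by (simp add: outer_cone_layer_def u_def dist_norm norm_minus_commute)
  then have "\<rho> / 2 \<le> norm u"
    using r by linarith
  then have "\<kappa> * (\<rho> / 2) \<le> \<kappa> * norm u"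
    using \<kappa> by (intro mult_left_mono) auto
  then have "\<tau> \<le> \<kappa> * norm u"
    using \<tau>(2) by (simp add: mult.assoc)
  moreover have "\<kappa> * norm u < u \<bullet> e" "norm u < \<rho>"
    using c(2) by (auto simp: u_def circ_cone_def dist_norm norm_minus_commute inner_diff_left)
  ultimately have "norm (u - \<tau> *\<^sub>R e) < norm u - \<tau> * \<kappa> / 2"
    using norm_diff_scaleR_lt[OF e \<kappa> \<tau>(1)] by blast
  moreover have "norm (u - \<tau> *\<^sub>R e) = dist (y + \<tau> *\<^sub>R e) c"
    by (simp add: u_def dist_norm norm_minus_commute algebra_simps)
  ultimately have "dist (y + \<tau> *\<^sub>R e) c < norm u - \<tau> * \<kappa> / 2"
    by simp
  then show ?thesis
    using infdist_frontier_ge[OF c(1) D, of "y + \<tau> *\<^sub>R e"] y(2) \<open>norm u < \<rho>\<close>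
    by (simp add: outer_cone_layer_def)
qed

lemma boundary_layer_in_cone_layers:
  fixes D :: "'a::euclidean_space set"
  assumes D: "smooth_domain D" "exterior_ball_radius D \<rho>" "0 < \<rho>"
    and "r \<le> \<rho>" "\<kappa> \<le> 1 / (2 * DIM('a))"
    and y: "0 < infdist y (frontier D)" "infdist y (frontier D) < r"
  shows "\<exists>e\<in>Basis \<union> uminus ` Basis. y \<in> inner_cone_layer D \<rho> r \<kappa> e \<union> outer_cone_layer D \<rho> r \<kappa> e"
proof (cases "y \<in> D")
  case True
  have "frontier D \<noteq> {}"
    using y by (auto simp: infdist_def)
  then obtain p c where p: "dist y p = infdist y (frontier D)" and c: "ball c \<rho> \<inter> D = {}" "dist c p = \<rho>"
    using exterior_ball_at_nearest_point[OF D(2)] by metis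
  have "dist y c \<le> dist y p + dist p c"
    by (rule dist_triangle)
  then have "dist c y < \<rho> + r"
    using p c(2) y(2) by (simp add: dist_commute)
  moreover have "y - c \<noteq> 0"
    using True c(1) centre_in_ball[of c \<rho>] D(3) by (metis disjoint_iff right_minus_eq)
  from exists_signed_basis_inner_gt[OF this assms(5)]
  obtain e where "e \<in> Basis \<union> uminus ` Basis" "\<kappa> * norm (y - c) < (y - c) \<bullet> e"
    by blast
  ultimately show ?thesis
    using True c(1) by (auto simp: inner_cone_layer_def exterior_centres_def circ_cone_def)
next
  case False
  then obtain c where c: "ball c \<rho> \<inter> D = {}" "dist y c = \<rho> - infdist y (frontier D)"
    using exterior_ball_containing_outside_point[OF D False y(1)] y(2) \<open>r \<le> \<rho>\<close> by auto
  then have "dist c y < \<rho>" "c - y \<noteq> 0"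
    using y \<open>r \<le> \<rho>\<close> by (auto simp: dist_commute)
  from exists_signed_basis_inner_gt[OF this(2) assms(5)]
  obtain e where "e \<in> Basis \<union> uminus ` Basis" "\<kappa> * norm (c - y) < (c - y) \<bullet> e"
    by blast
  then show ?thesis
    using \<open>dist c y < \<rho>\<close> c(1) y
    by (auto simp: outer_cone_layer_def exterior_centres_def circ_cone_def norm_minus_commute inner_diff_left)
qed

lemma emeasure_cball_Int_le_of_short_gaps:
  fixes S :: "'a::euclidean_space set"
  assumes "open S" "norm e = 1" "0 < L" "L \<le> M" "M \<le> \<epsilon>"
    and gaps: "\<And>y \<tau>. y \<in> S \<Longrightarrow> y + \<tau> *\<^sub>R e \<in> S \<Longrightarrow> 0 < \<tau> \<Longrightarrow> \<tau> \<le> M \<Longrightarrow> \<tau> < L"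
  shows "emeasure lborel (cball x \<epsilon> \<inter> S) \<le> ennreal (2 * L / M * (4 * \<epsilon>) ^ DIM('a))"
  using assms(1-5) gaps by (intro emeasure_le_of_short_gaps) (auto intro: sets.Int borel_open)

lemma emeasure_thin_boundary_layer_le:
  fixes D :: "'a::euclidean_space set"
  assumes D: "smooth_domain D" "exterior_ball_radius D \<rho>" and "0 < r"
    and M: "4 * real DIM('a) * r \<le> M" "M \<le> \<epsilon>" "4 * real DIM('a) * M \<le> \<rho>"
  shows "emeasure lborel {y \<in> cball x \<epsilon>. 0 < infdist y (frontier D) \<and> infdist y (frontier D) < r}
    \<le> ennreal (32 * real DIM('a) ^ 2 * r / M * (4 * \<epsilon>) ^ DIM('a))"
proof -
  define n where "n = real DIM('a)"
  define \<kappa> where "\<kappa> = 1 / (2 * n)"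
  define Dirs :: "'a set" where "Dirs = Basis \<union> uminus ` Basis"
  define B where "B = 2 * (4 * n * r) / M * (4 * \<epsilon>) ^ DIM('a)"
  have n: "1 \<le> n"
    unfolding n_def using DIM_positive[where 'a='a] by linarith
  then have \<kappa>: "0 < \<kappa>" "\<kappa> \<le> 1" "\<kappa> \<le> 1 / (2 * DIM('a))" "2 * r / \<kappa> = 4 * n * r"
    by (simp_all add: \<kappa>_def n_def[symmetric])
  have LM: "0 < 4 * n * r" "4 * n * r \<le> M" "M \<le> \<epsilon>" "M \<le> \<kappa> * \<rho> / 2" "r \<le> \<rho> / 2"
  proof -
    show nr: "0 < 4 * n * r" "4 * n * r \<le> M" "M \<le> \<epsilon>"
      using n \<open>0 < r\<close> M by (simp_all add: n_def)
    then have "0 < M"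
      by linarith
    then have "4 * r \<le> 4 * n * r" "4 * M \<le> 4 * n * M"
      using n \<open>0 < r\<close> by simp_all
    then show "r \<le> \<rho> / 2"
      using M \<open>0 < r\<close> unfolding n_def by linarith
    show "M \<le> \<kappa> * \<rho> / 2"
      using M n by (simp add: \<kappa>_def n_def field_simps)
  qed
  have "finite Dirs"
    by (simp add: Dirs_def)
  have Dirs: "norm e = 1" if "e \<in> Dirs" for e
    using that by (auto simp: Dirs_def)
  have "open D"
    using D(1) by (simp add: smooth_domain_def is_domain_def)
  have gap: "\<tau> < 4 * n * r" if "\<tau> * \<kappa> < 2 * r" for \<tau>
    using that \<kappa>(1,4) by (simp flip: \<kappa>(4) add: pos_less_divide_eq)
  have inner_le: "emeasure lborel (cball x \<epsilon> \<inter> inner_cone_layer D \<rho> r \<kappa> e) \<le> ennreal B"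
    if "e \<in> Dirs" for e
    unfolding B_def
  proof (rule emeasure_cball_Int_le_of_short_gaps[OF open_inner_cone_layer[OF \<open>open D\<close>] Dirs[OF that] LM(1-3)])
    fix y \<tau> assume y: "y \<in> inner_cone_layer D \<rho> r \<kappa> e" "y + \<tau> *\<^sub>R e \<in> inner_cone_layer D \<rho> r \<kappa> e"
      and \<tau>: "0 < \<tau>" "\<tau> \<le> M"
    have "\<tau> \<le> \<kappa> * \<rho> / 2"
      using \<tau>(2) LM(4) by linarith
    from inner_cone_layer_short_gaps[OF Dirs[OF that] \<kappa>(1,2) \<tau>(1) this y]
    show "\<tau> < 4 * n * r"
      by (rule gap)
  qed
  have outer_le: "emeasure lborel (cball x \<epsilon> \<inter> outer_cone_layer D \<rho> r \<kappa> e) \<le> ennreal B"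
    if "e \<in> Dirs" for e
    unfolding B_def
  proof (rule emeasure_cball_Int_le_of_short_gaps[OF open_outer_cone_layer Dirs[OF that] LM(1-3)])
    fix y \<tau> assume y: "y \<in> outer_cone_layer D \<rho> r \<kappa> e" "y + \<tau> *\<^sub>R e \<in> outer_cone_layer D \<rho> r \<kappa> e"
      and \<tau>: "0 < \<tau>" "\<tau> \<le> M"
    have "\<tau> \<le> \<kappa> * \<rho> / 2"
      using \<tau>(2) LM(4) by linarith
    from outer_cone_layer_short_gaps[OF Dirs[OF that] \<kappa>(1,2) \<tau>(1) this LM(5) y]
    show "\<tau> < 4 * n * r"
      by (rule gap)
  qed
  have cover: "{y \<in> cball x \<epsilon>. 0 < infdist y (frontier D) \<and> infdist y (frontier D) < r}
      \<subseteq> (\<Union>e\<in>Dirs. cball x \<epsilon> \<inter> inner_cone_layer D \<rho> r \<kappa> e) \<union> (\<Union>e\<in>Dirs. cball x \<epsilon> \<inter> outer_cone_layer D \<rho> r \<kappa> e)"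
  proof
    fix y assume y: "y \<in> {y \<in> cball x \<epsilon>. 0 < infdist y (frontier D) \<and> infdist y (frontier D) < r}"
    have "0 < \<rho>" "r \<le> \<rho>"
      using LM(5) \<open>0 < r\<close> by linarith+
    from boundary_layer_in_cone_layers[OF D this \<kappa>(3), of y] y
    obtain e where "e \<in> Dirs" "y \<in> inner_cone_layer D \<rho> r \<kappa> e \<union> outer_cone_layer D \<rho> r \<kappa> e"
      unfolding Dirs_def by blast
    then show "y \<in> (\<Union>e\<in>Dirs. cball x \<epsilon> \<inter> inner_cone_layer D \<rho> r \<kappa> e) \<union> (\<Union>e\<in>Dirs. cball x \<epsilon> \<inter> outer_cone_layer D \<rho> r \<kappa> e)"
      using y by blast
  qed
  have meas: "cball x \<epsilon> \<inter> inner_cone_layer D \<rho> r \<kappa> e \<in> sets lborel"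
    "cball x \<epsilon> \<inter> outer_cone_layer D \<rho> r \<kappa> e \<in> sets lborel" for e
    unfolding sets_lborel
    by (intro sets.Int borel_closed borel_open closed_cball open_inner_cone_layer[OF \<open>open D\<close>]
        open_outer_cone_layer)+
  have "0 \<le> B"
    using LM by (simp add: B_def)
  have "card Dirs \<le> 2 * DIM('a)"
    unfolding Dirs_def
    using card_Un_le[of "Basis :: 'a set" "uminus ` Basis"] card_image_le[of "Basis :: 'a set" uminus]
    by simp
  then have "real (card Dirs) * B \<le> 2 * n * B"
    using \<open>0 \<le> B\<close> mult_right_mono[of "real (card Dirs)" "2 * n" B] by (simp add: n_def)
  then have card_B: "real (card Dirs) * B + real (card Dirs) * B \<le> 4 * n * B"
    by linarith
  have UN_meas: "(\<Union>e\<in>Dirs. cball x \<epsilon> \<inter> inner_cone_layer D \<rho> r \<kappa> e) \<in> sets lborel"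
    "(\<Union>e\<in>Dirs. cball x \<epsilon> \<inter> outer_cone_layer D \<rho> r \<kappa> e) \<in> sets lborel"
    by (intro sets.finite_UN meas \<open>finite Dirs\<close>)+
  have "emeasure lborel {y \<in> cball x \<epsilon>. 0 < infdist y (frontier D) \<and> infdist y (frontier D) < r}
      \<le> emeasure lborel ((\<Union>e\<in>Dirs. cball x \<epsilon> \<inter> inner_cone_layer D \<rho> r \<kappa> e)
        \<union> (\<Union>e\<in>Dirs. cball x \<epsilon> \<inter> outer_cone_layer D \<rho> r \<kappa> e))"
    by (rule emeasure_mono[OF cover sets.Un[OF UN_meas]])
  also have "\<dots> \<le> emeasure lborel (\<Union>e\<in>Dirs. cball x \<epsilon> \<inter> inner_cone_layer D \<rho> r \<kappa> e)
        + emeasure lborel (\<Union>e\<in>Dirs. cball x \<epsilon> \<inter> outer_cone_layer D \<rho> r \<kappa> e)"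
    by (rule emeasure_subadditive[OF UN_meas])
  also have "\<dots> \<le> ennreal (real (card Dirs) * B) + ennreal (real (card Dirs) * B)"
    using meas inner_le outer_le \<open>0 \<le> B\<close> \<open>finite Dirs\<close>
    by (intro add_mono emeasure_UN_le_card_mult) auto
  also have "\<dots> \<le> ennreal (4 * n * B)"
    using card_B \<open>0 \<le> B\<close> by (subst ennreal_plus[symmetric]) (auto intro: ennreal_leI)
  also have "4 * n * B = 32 * real DIM('a) ^ 2 * r / M * (4 * \<epsilon>) ^ DIM('a)"
    by (simp add: B_def n_def power2_eq_square)
  finally show ?thesis .
qed

lemma emeasure_boundary_layer_le:
  fixes D :: "'a::euclidean_space set"
  assumes D: "smooth_domain D" "exterior_ball_radius D \<rho>"
    and pos: "0 < \<rho>" "0 < \<epsilon>" "\<epsilon> \<le> \<epsilon>0" "0 < r"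
  defines "K \<equiv> 32 * real DIM('a) ^ 2 * 4 ^ DIM('a) * (1 + 4 * real DIM('a) * \<epsilon>0 / \<rho>)"
  shows "emeasure lborel {y \<in> cball x \<epsilon>. 0 < infdist y (frontier D) \<and> infdist y (frontier D) < r}
    \<le> ennreal (K * r * \<epsilon> ^ (DIM('a) - 1))"
proof -
  define n where "n = real DIM('a)"
  define A where "A = 1 + 4 * n * \<epsilon>0 / \<rho>"
  define M where "M = \<epsilon> / A"
  have n: "1 \<le> n"
    unfolding n_def using DIM_positive[where 'a='a] by linarith
  have "1 \<le> A"
    using n pos by (simp add: A_def)
  have K: "K = 32 * n ^ 2 * 4 ^ DIM('a) * A"
    by (simp add: K_def A_def n_def)
  show ?thesis
  proof (cases "4 * n * r \<le> M")
    case True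
    have "M \<le> \<epsilon>"
      using \<open>1 \<le> A\<close> pos by (simp add: M_def divide_le_eq)
    moreover have "4 * n * M \<le> \<rho>"
    proof -
      have "4 * n * \<epsilon> \<le> 4 * n * \<epsilon>0"
        using n pos by simp
      also have "\<dots> \<le> \<rho> * A"
        using pos by (simp add: A_def algebra_simps)
      finally show ?thesis
        using \<open>1 \<le> A\<close> by (simp add: M_def field_simps)
    qed
    ultimately have "emeasure lborel {y \<in> cball x \<epsilon>. 0 < infdist y (frontier D) \<and> infdist y (frontier D) < r}
      \<le> ennreal (32 * n ^ 2 * r / M * (4 * \<epsilon>) ^ DIM('a))"
      using emeasure_thin_boundary_layer_le[OF D pos(4), of M \<epsilon> x] True by (simp add: n_def)
    also have "32 * n ^ 2 * r / M * (4 * \<epsilon>) ^ DIM('a) = K * r * \<epsilon> ^ (DIM('a) - 1)"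
      using \<open>1 \<le> A\<close> pos
      by (simp add: K M_def power_mult_distrib power_eq_if[of \<epsilon> "DIM('a)"] field_simps)
    finally show ?thesis .
  next
    case False
    then have "\<epsilon> \<le> A * (4 * n * r)"
      using \<open>1 \<le> A\<close> by (simp add: M_def field_simps)
    then have "emeasure lborel (cball x \<epsilon>) \<le> ennreal (2 ^ DIM('a) * (A * (4 * n * r)) * \<epsilon> ^ (DIM('a) - 1))"
      using pos by (intro emeasure_lborel_cball_le_of_radius_le)
    also have "2 ^ DIM('a) * (A * (4 * n * r)) \<le> K * r"
    proof -
      have "(2::real) ^ DIM('a) \<le> 4 ^ DIM('a)" "4 * n \<le> 32 * n ^ 2"
        using n by (simp_all add: power_mono power2_eq_square)
      then have "2 ^ DIM('a) * (4 * n) \<le> 4 ^ DIM('a) * (32 * n ^ 2)"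
        by (rule mult_mono) (use n in auto)
      then have "2 ^ DIM('a) * (4 * n) * (A * r) \<le> 4 ^ DIM('a) * (32 * n ^ 2) * (A * r)"
        using \<open>1 \<le> A\<close> pos by (intro mult_right_mono) auto
      then show ?thesis
        by (simp add: K mult_ac)
    qed
    then have "ennreal (2 ^ DIM('a) * (A * (4 * n * r)) * \<epsilon> ^ (DIM('a) - 1)) \<le> ennreal (K * r * \<epsilon> ^ (DIM('a) - 1))"
      using pos by (intro ennreal_leI mult_right_mono) auto
    finally show ?thesis
      by (rule order_trans[rotated, OF _ emeasure_mono]) auto
  qed
qed

lemma exists_dyadic_shell:
  fixes t \<epsilon> :: real
  assumes "0 < t" "t < \<epsilon>"
  shows "\<exists>k. \<epsilon> / 2 ^ (k + 1) \<le> t \<and> t < \<epsilon> / 2 ^ k"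
proof -
  obtain m where "\<epsilon> / t < 2 ^ m"
    using real_arch_pow[of 2 "\<epsilon> / t"] by auto
  then have ex: "\<exists>m. \<epsilon> / 2 ^ (m + 1) \<le> t"
    using assms by (intro exI[of _ m]) (simp add: field_simps)
  define k where "k = (LEAST m. \<epsilon> / 2 ^ (m + 1) \<le> t)"
  have "\<epsilon> / 2 ^ (k + 1) \<le> t"
    unfolding k_def by (rule LeastI_ex[OF ex])
  moreover have "t < \<epsilon> / 2 ^ k"
  proof (cases k)
    case (Suc j)
    then have "\<not> \<epsilon> / 2 ^ (j + 1) \<le> t"
      using not_less_Least[of j "\<lambda>m. \<epsilon> / 2 ^ (m + 1) \<le> t"] by (simp add: k_def)
    then show ?thesis
      using Suc by simp
  qed (use assms in simp)
  ultimately show ?thesis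
    by blast
qed

text \<open>The case \<open>t = 0\<close> is covered because \<open>0 powr - s = 0\<close>.\<close>
lemma powr_neg_le_dyadic_sum:
  fixes t \<epsilon> s :: real
  assumes "0 \<le> t" "0 < \<epsilon>" "0 < s"
  shows "ennreal (t powr - s)
    \<le> ennreal (\<epsilon> powr - s) + (\<Sum>k. ennreal ((\<epsilon> / 2 ^ (k + 1)) powr - s) * indicator {0<..<\<epsilon> / 2 ^ k} t)"
proof -
  consider "t = 0" | "\<epsilon> \<le> t" | "0 < t" "t < \<epsilon>"
    using assms(1) by linarith
  then show ?thesis
  proof cases
    case 2
    then have "t powr - s \<le> \<epsilon> powr - s"
      using assms by (intro powr_mono2') auto
    then show ?thesis
      by (simp add: add_increasing2 ennreal_leI)
  next
    case 3
    then obtain k where k: "\<epsilon> / 2 ^ (k + 1) \<le> t" "t < \<epsilon> / 2 ^ k"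
      using exists_dyadic_shell by blast
    define f where "f j = ennreal ((\<epsilon> / 2 ^ (j + 1)) powr - s) * indicator {0<..<\<epsilon> / 2 ^ j} t" for j
    have "t powr - s \<le> (\<epsilon> / 2 ^ (k + 1)) powr - s"
      using k assms by (intro powr_mono2') auto
    then have "ennreal (t powr - s) \<le> f k"
      using k 3 by (simp add: f_def ennreal_leI)
    also have "f k \<le> suminf f"
      using sum_le_suminf[of f "{k}"] by (simp add: summableI)
    finally show ?thesis
      unfolding f_def by (rule add_increasing[OF zero_le])
  qed simp
qed

lemma suminf_dyadic_powr_neg:
  fixes s \<epsilon> c :: real
  assumes s: "0 < s" "s < 1" and "0 < \<epsilon>" "0 \<le> c"
  shows "(\<Sum>k. ennreal ((\<epsilon> / 2 ^ (k + 1)) powr - s * (c * (\<epsilon> / 2 ^ k))))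
    = ennreal (c * \<epsilon> * \<epsilon> powr - s * 2 powr s / (1 - 2 powr (s - 1)))"
proof -
  define q where "q = (2::real) powr (s - 1)"
  have "q < 2 powr 0"
    unfolding q_def using s by (intro powr_less_mono) auto
  then have q: "0 < q" "q < 1"
    by (auto simp: q_def)
  have dyadic_term: "(\<epsilon> / 2 ^ (k + 1)) powr - s * (c * (\<epsilon> / 2 ^ k)) = (c * \<epsilon> * \<epsilon> powr - s * 2 powr s) * q ^ k" for k
  proof -
    have "(2::real) ^ (k + 1) = 2 powr (real k + 1)"
      using powr_realpow[of 2 "k + 1"] by (simp add: add.commute)
    then have "(\<epsilon> / 2 ^ (k + 1)) powr - s = \<epsilon> powr - s / (2 powr (real k + 1)) powr - s"
      using \<open>0 < \<epsilon>\<close> by (simp add: powr_divide)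
    also have "\<dots> = \<epsilon> powr - s * 2 powr (s * (real k + 1))"
      by (simp add: powr_powr powr_minus divide_inverse mult.commute)
    finally have "(\<epsilon> / 2 ^ (k + 1)) powr - s = \<epsilon> powr - s * 2 powr (s * (real k + 1))" .
    moreover have "2 powr (s * (real k + 1)) / 2 ^ k = 2 powr s * q ^ k"
      by (simp add: q_def powr_realpow[symmetric] powr_powr powr_diff[symmetric] powr_add[symmetric]
          algebra_simps)
    ultimately show ?thesis
      by (simp add: field_simps)
  qed
  have "(\<Sum>k. ennreal ((\<epsilon> / 2 ^ (k + 1)) powr - s * (c * (\<epsilon> / 2 ^ k))))
      = (\<Sum>k. ennreal ((c * \<epsilon> * \<epsilon> powr - s * 2 powr s) * q ^ k))"
    by (simp only: dyadic_term)
  also have "\<dots> = ennreal (\<Sum>k. (c * \<epsilon> * \<epsilon> powr - s * 2 powr s) * q ^ k)"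
    using q assms by (intro suminf_ennreal2) (auto intro!: summable_mult)
  also have "(\<Sum>k. (c * \<epsilon> * \<epsilon> powr - s * 2 powr s) * q ^ k) = c * \<epsilon> * \<epsilon> powr - s * 2 powr s / (1 - q)"
    using q by (simp add: suminf_mult suminf_geometric divide_inverse)
  finally show ?thesis
    by (simp add: q_def)
qed

lemma nn_integral_powr_neg_le_dyadic_layers:
  fixes d :: "'a::euclidean_space \<Rightarrow> real"
  assumes d: "d \<in> borel_measurable lborel" "\<And>y. 0 \<le> d y" and "0 < \<epsilon>" "0 < s"
  shows "(\<integral>\<^sup>+ y. ennreal (d y powr - s) * indicator (cball x \<epsilon>) y \<partial>lborel)
    \<le> ennreal (\<epsilon> powr - s) * emeasure lborel (cball x \<epsilon>)
      + (\<Sum>k. ennreal ((\<epsilon> / 2 ^ (k + 1)) powr - s) * emeasure lborel {y \<in> cball x \<epsilon>. 0 < d y \<and> d y < \<epsilon> / 2 ^ k})"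
proof -
  define W where "W k = (\<epsilon> / 2 ^ (k + 1)) powr - s" for k :: nat
  define A where "A k = {y \<in> cball x \<epsilon>. 0 < d y \<and> d y < \<epsilon> / 2 ^ k}" for k :: nat
  have [measurable]: "d \<in> borel_measurable lborel"
    by (fact d(1))
  have A_meas: "A k \<in> sets lborel" for k
    unfolding A_def by measurable
  have cball_meas: "cball x \<epsilon> \<in> sets lborel"
    by simp
  have "ennreal (d y powr - s) * indicator (cball x \<epsilon>) y
      \<le> ennreal (\<epsilon> powr - s) * indicator (cball x \<epsilon>) y + (\<Sum>k. ennreal (W k) * indicator (A k) y)" for y
  proof (cases "y \<in> cball x \<epsilon>")
    case True
    then have "indicator (A k) y = (indicator {0<..<\<epsilon> / 2 ^ k} (d y) :: ennreal)" for k
      by (simp add: A_def indicator_def)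
    then show ?thesis
      using powr_neg_le_dyadic_sum[OF d(2) \<open>0 < \<epsilon>\<close> \<open>0 < s\<close>, of y] True by (simp add: W_def)
  qed simp
  then have "(\<integral>\<^sup>+ y. ennreal (d y powr - s) * indicator (cball x \<epsilon>) y \<partial>lborel)
      \<le> (\<integral>\<^sup>+ y. ennreal (\<epsilon> powr - s) * indicator (cball x \<epsilon>) y + (\<Sum>k. ennreal (W k) * indicator (A k) y) \<partial>lborel)"
    by (intro nn_integral_mono)
  also have "\<dots> = ennreal (\<epsilon> powr - s) * emeasure lborel (cball x \<epsilon>) + (\<Sum>k. ennreal (W k) * emeasure lborel (A k))"
  proof -
    have indicator_meas: "(\<lambda>y. ennreal a * indicator S y) \<in> borel_measurable lborel"
      if "S \<in> sets lborel" for a S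
      using that by (intro borel_measurable_times_ennreal borel_measurable_indicator) auto
    have "(\<lambda>y. \<Sum>k. ennreal (W k) * indicator (A k) y) \<in> borel_measurable lborel"
      using A_meas by (intro borel_measurable_suminf_order indicator_meas)
    from nn_integral_add[OF indicator_meas[OF cball_meas] this]
    show ?thesis
      by (simp only: nn_integral_suminf[OF indicator_meas[OF A_meas]]
          nn_integral_cmult_indicator[OF A_meas] nn_integral_cmult_indicator[OF cball_meas])
  qed
  finally show ?thesis
    by (simp only: W_def A_def)
qed

lemma nn_integral_powr_neg_cball_le:
  fixes d :: "'a::euclidean_space \<Rightarrow> real"
  assumes d: "d \<in> borel_measurable lborel" "\<And>y. 0 \<le> d y" and s: "0 < s" "s < 1"
    and "0 < \<epsilon>" "0 \<le> K"
    and layer: "\<And>r. 0 < r \<Longrightarrow>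
      emeasure lborel {y \<in> cball x \<epsilon>. 0 < d y \<and> d y < r} \<le> ennreal (K * r * \<epsilon> ^ (DIM('a) - 1))"
  shows "(\<integral>\<^sup>+ y. ennreal (d y powr - s) * indicator (cball x \<epsilon>) y \<partial>lborel)
    \<le> ennreal ((2 ^ DIM('a) + K * 2 powr s / (1 - 2 powr (s - 1))) * \<epsilon> ^ DIM('a) * \<epsilon> powr - s)"
proof -
  define W where "W k = (\<epsilon> / 2 ^ (k + 1)) powr - s" for k :: nat
  define A where "A k = {y \<in> cball x \<epsilon>. 0 < d y \<and> d y < \<epsilon> / 2 ^ k}" for k :: nat
  define c where "c = K * \<epsilon> ^ (DIM('a) - 1)"
  have "(\<integral>\<^sup>+ y. ennreal (d y powr - s) * indicator (cball x \<epsilon>) y \<partial>lborel)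
      \<le> ennreal (\<epsilon> powr - s) * emeasure lborel (cball x \<epsilon>) + (\<Sum>k. ennreal (W k) * emeasure lborel (A k))"
    unfolding W_def A_def using d \<open>0 < \<epsilon>\<close> s(1) by (rule nn_integral_powr_neg_le_dyadic_layers)
  also have "\<dots> \<le> ennreal (\<epsilon> powr - s) * ennreal ((2 * \<epsilon>) ^ DIM('a))
      + (\<Sum>k. ennreal (W k * (c * (\<epsilon> / 2 ^ k))))"
  proof (intro add_mono mult_left_mono suminf_le)
    show "emeasure lborel (cball x \<epsilon>) \<le> ennreal ((2 * \<epsilon>) ^ DIM('a))"
      using \<open>0 < \<epsilon>\<close> by (intro emeasure_lborel_cball_le) simp
    fix k
    have A_le: "emeasure lborel (A k) \<le> ennreal (c * (\<epsilon> / 2 ^ k))"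
      using layer[of "\<epsilon> / 2 ^ k"] \<open>0 < \<epsilon>\<close> by (simp add: A_def c_def mult_ac)
    have "0 \<le> W k"
      by (simp add: W_def)
    show "ennreal (W k) * emeasure lborel (A k) \<le> ennreal (W k * (c * (\<epsilon> / 2 ^ k)))"
      unfolding ennreal_mult'[OF \<open>0 \<le> W k\<close>] by (rule mult_left_mono[OF A_le]) simp
  qed auto
  also have "\<dots> = ennreal (\<epsilon> powr - s * (2 * \<epsilon>) ^ DIM('a)) + ennreal (c * \<epsilon> * \<epsilon> powr - s * 2 powr s / (1 - 2 powr (s - 1)))"
  proof -
    have "0 \<le> c"
      using \<open>0 \<le> K\<close> \<open>0 < \<epsilon>\<close> by (simp add: c_def)
    have "ennreal (\<epsilon> powr - s) * ennreal ((2 * \<epsilon>) ^ DIM('a)) = ennreal (\<epsilon> powr - s * (2 * \<epsilon>) ^ DIM('a))"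
      by (rule ennreal_mult'[symmetric]) simp
    then show ?thesis
      unfolding W_def suminf_dyadic_powr_neg[OF s \<open>0 < \<epsilon>\<close> \<open>0 \<le> c\<close>] by (rule arg_cong2[where f = "(+)"]) (rule refl)
  qed
  also have "\<dots> = ennreal ((2 ^ DIM('a) + K * 2 powr s / (1 - 2 powr (s - 1))) * \<epsilon> ^ DIM('a) * \<epsilon> powr - s)"
  proof -
    have "c * \<epsilon> = K * \<epsilon> ^ DIM('a)"
    proof -
      have "\<epsilon> ^ (DIM('a) - 1) * \<epsilon> = \<epsilon> ^ DIM('a)"
        by (rule power_minus_mult) simp
      then show ?thesis
        unfolding c_def mult.assoc by simp
    qed
    have "2 powr (s - 1) < 2 powr 0"
      using s by (intro powr_less_mono) auto
    then have q: "2 powr (s - 1) < 1"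
      by simp
    then have "0 \<le> c * \<epsilon> * \<epsilon> powr - s * 2 powr s / (1 - 2 powr (s - 1))"
      using \<open>0 \<le> K\<close> \<open>0 < \<epsilon>\<close> by (simp add: c_def)
    then have "ennreal (\<epsilon> powr - s * (2 * \<epsilon>) ^ DIM('a)) + ennreal (c * \<epsilon> * \<epsilon> powr - s * 2 powr s / (1 - 2 powr (s - 1)))
        = ennreal (\<epsilon> powr - s * (2 * \<epsilon>) ^ DIM('a) + c * \<epsilon> * \<epsilon> powr - s * 2 powr s / (1 - 2 powr (s - 1)))"
      using \<open>0 < \<epsilon>\<close> by (intro ennreal_plus[symmetric]) auto
    also have "\<epsilon> powr - s * (2 * \<epsilon>) ^ DIM('a) + c * \<epsilon> * \<epsilon> powr - s * 2 powr s / (1 - 2 powr (s - 1))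
        = (2 ^ DIM('a) + K * 2 powr s / (1 - 2 powr (s - 1))) * \<epsilon> ^ DIM('a) * \<epsilon> powr - s"
      unfolding \<open>c * \<epsilon> = K * \<epsilon> ^ DIM('a)\<close> using q by (simp add: power_mult_distrib field_simps)
    finally show ?thesis .
  qed
  finally show ?thesis .
qed

lemma nn_integral_mollifier_le:
  fixes f \<eta> :: "'a::euclidean_space \<Rightarrow> real"
  assumes f: "f \<in> borel_measurable lborel" "\<And>y. 0 \<le> f y" and "0 < \<epsilon>" "0 \<le> M"
    and \<eta>: "\<And>z. \<eta> z \<le> M" "\<And>z. z \<notin> cball 0 1 \<Longrightarrow> \<eta> z = 0"
  shows "(\<integral>\<^sup>+ y. ennreal (f y * ((1 / \<epsilon>) ^ DIM('a) * \<eta> ((1 / \<epsilon>) *\<^sub>R (x - y)))) \<partial>lborel)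
    \<le> ennreal (M / \<epsilon> ^ DIM('a)) * (\<integral>\<^sup>+ y. ennreal (f y) * indicator (cball x \<epsilon>) y \<partial>lborel)"
proof -
  have "ennreal (f y * ((1 / \<epsilon>) ^ DIM('a) * \<eta> ((1 / \<epsilon>) *\<^sub>R (x - y))))
      \<le> ennreal (M / \<epsilon> ^ DIM('a)) * (ennreal (f y) * indicator (cball x \<epsilon>) y)" for y
  proof (cases "y \<in> cball x \<epsilon>")
    case True
    have "f y * ((1 / \<epsilon>) ^ DIM('a) * \<eta> ((1 / \<epsilon>) *\<^sub>R (x - y))) \<le> f y * ((1 / \<epsilon>) ^ DIM('a) * M)"
      using f(2) \<eta>(1) \<open>0 < \<epsilon>\<close> by (intro mult_left_mono) auto
    then show ?thesis
      using True f(2) \<open>0 \<le> M\<close> \<open>0 < \<epsilon>\<close>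
      by (simp add: ennreal_mult'[symmetric] ennreal_leI power_one_over mult.commute)
  next
    case False
    then have "(1 / \<epsilon>) *\<^sub>R (x - y) \<notin> cball 0 1"
      using \<open>0 < \<epsilon>\<close> by (simp add: dist_norm divide_le_eq)
    then show ?thesis
      using \<eta>(2) by simp
  qed
  then have "(\<integral>\<^sup>+ y. ennreal (f y * ((1 / \<epsilon>) ^ DIM('a) * \<eta> ((1 / \<epsilon>) *\<^sub>R (x - y)))) \<partial>lborel)
      \<le> (\<integral>\<^sup>+ y. ennreal (M / \<epsilon> ^ DIM('a)) * (ennreal (f y) * indicator (cball x \<epsilon>) y) \<partial>lborel)"
    by (intro nn_integral_mono)
  also have "\<dots> = ennreal (M / \<epsilon> ^ DIM('a)) * (\<integral>\<^sup>+ y. ennreal (f y) * indicator (cball x \<epsilon>) y \<partial>lborel)"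
  proof (intro nn_integral_cmult)
    have [measurable]: "f \<in> borel_measurable lborel"
      by (fact f(1))
    show "(\<lambda>y. ennreal (f y) * indicator (cball x \<epsilon>) y) \<in> borel_measurable lborel"
      by measurable (simp add: pred_def borel_closed)
  qed
  finally show ?thesis .
qed

lemma continuous_compact_support_bounded_above:
  fixes f :: "'a::euclidean_space \<Rightarrow> real"
  assumes "continuous_on UNIV f" "compact S" "\<And>z. z \<notin> S \<Longrightarrow> f z = 0"
  obtains M where "0 < M" "\<And>z. f z \<le> M"
proof -
  have "bounded (f ` S)"
    using continuous_on_subset[OF assms(1) subset_UNIV] assms(2)
    by (intro compact_imp_bounded compact_continuous_image)
  then obtain a where a: "\<forall>v\<in>f ` S. norm v \<le> a"
    unfolding bounded_iff by blast
  have "f z \<le> max 1 a" for z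
  proof (cases "z \<in> S")
    case True
    then have "norm (f z) \<le> a"
      using a by blast
    then show ?thesis
      by simp
  qed (simp add: assms(3))
  then show thesis
    using that[of "max 1 a"] by simp
qed

lemma nn_integral_mollified_infdist_powr_le:
  fixes D :: "'a::euclidean_space set" and \<eta> :: "'a \<Rightarrow> real"
  assumes D: "smooth_domain D" "exterior_ball_radius D \<rho>" "0 < \<rho>" and \<epsilon>: "0 < \<epsilon>" "\<epsilon> \<le> \<epsilon>0"
    and s: "0 < s" "s < 1" and \<eta>: "\<And>z. \<eta> z \<le> M" "\<And>z. z \<notin> cball 0 1 \<Longrightarrow> \<eta> z = 0" "0 \<le> M"
  defines "K \<equiv> 32 * real DIM('a) ^ 2 * 4 ^ DIM('a) * (1 + 4 * real DIM('a) * \<epsilon>0 / \<rho>)"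
  shows "(\<integral>\<^sup>+ y. ennreal (infdist y (frontier D) powr - s * ((1 / \<epsilon>) ^ DIM('a) * \<eta> ((1 / \<epsilon>) *\<^sub>R (x - y))))
      \<partial>lborel) \<le> ennreal (M * (2 ^ DIM('a) + K * 2 powr s / (1 - 2 powr (s - 1))) * \<epsilon> powr - s)"
proof -
  define d where "d y = infdist y (frontier D)" for y
  define C where "C = 2 ^ DIM('a) + K * 2 powr s / (1 - 2 powr (s - 1))"
  have "continuous_on UNIV d"
    unfolding d_def by (intro continuous_intros)
  then have d_meas: "d \<in> borel_measurable lborel"
    using borel_measurable_continuous_onI by (simp add: measurable_lborel1)
  have "0 \<le> K"
    using \<epsilon> D(3) by (simp add: K_def)
  have "(\<integral>\<^sup>+ y. ennreal (d y powr - s * ((1 / \<epsilon>) ^ DIM('a) * \<eta> ((1 / \<epsilon>) *\<^sub>R (x - y)))) \<partial>lborel)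
      \<le> ennreal (M / \<epsilon> ^ DIM('a)) * (\<integral>\<^sup>+ y. ennreal (d y powr - s) * indicator (cball x \<epsilon>) y \<partial>lborel)"
  proof (rule nn_integral_mollifier_le)
    show "(\<lambda>y. d y powr - s) \<in> borel_measurable lborel"
      using d_meas by measurable
  qed (use \<eta> \<epsilon> in auto)
  also have "\<dots> \<le> ennreal (M / \<epsilon> ^ DIM('a)) * ennreal (C * \<epsilon> ^ DIM('a) * \<epsilon> powr - s)"
  proof (rule mult_left_mono)
    show "(\<integral>\<^sup>+ y. ennreal (d y powr - s) * indicator (cball x \<epsilon>) y \<partial>lborel)
        \<le> ennreal (C * \<epsilon> ^ DIM('a) * \<epsilon> powr - s)"
      unfolding C_def
    proof (rule nn_integral_powr_neg_cball_le[OF d_meas _ s \<epsilon>(1) \<open>0 \<le> K\<close>])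
      show "0 \<le> d y" for y
        by (simp add: d_def infdist_nonneg)
      show "emeasure lborel {y \<in> cball x \<epsilon>. 0 < d y \<and> d y < r} \<le> ennreal (K * r * \<epsilon> ^ (DIM('a) - 1))"
        if "0 < r" for r
        using emeasure_boundary_layer_le[OF D(1,2,3) \<epsilon> that, of x] unfolding K_def d_def .
    qed
  qed simp
  also have "\<dots> = ennreal (M * C * \<epsilon> powr - s)"
    using \<eta>(3) \<epsilon> by (simp add: ennreal_mult'[symmetric] field_simps)
  finally show ?thesis
    by (simp add: d_def C_def)
qed

theorem lemma2p14:
  fixes \<Omega> :: "'a::euclidean_space set"
    and D :: "real \<Rightarrow> 'a set"
    and \<eta> :: "'a \<Rightarrow> real"
    and s \<epsilon>0 lam :: real
  assumes s: "0 < s" "s < 1"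
    and \<Omega>: "bounded \<Omega>" "lipschitz_domain \<Omega>" "uniform_exterior_ball \<Omega>"
    and \<epsilon>0: "0 < \<epsilon>0"
    and lam: "lam > 1"
    and Dsmooth: "\<And>\<epsilon>. 0 < \<epsilon> \<Longrightarrow> \<epsilon> < \<epsilon>0 \<Longrightarrow> smooth_domain (D \<epsilon>)"
    and Dmono: "\<And>\<epsilon> \<epsilon>'. 0 < \<epsilon>' \<Longrightarrow> \<epsilon>' < \<epsilon> \<Longrightarrow> \<epsilon> < \<epsilon>0 \<Longrightarrow> D \<epsilon> \<subseteq> D \<epsilon>'"
    and Dcc: "\<And>\<epsilon>. 0 < \<epsilon> \<Longrightarrow> \<epsilon> < \<epsilon>0 \<Longrightarrow> compactly_contained (D \<epsilon>) \<Omega>"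
    and Dunion: "(\<Union>\<epsilon>\<in>{0<..<\<epsilon>0}. D \<epsilon>) = \<Omega>"
    and Dball: "\<exists>\<rho>>0. \<forall>\<epsilon>. 0 < \<epsilon> \<and> \<epsilon> < \<epsilon>0 \<longrightarrow> exterior_ball_radius (D \<epsilon>) \<rho>"
    and Ddist1: "\<And>\<epsilon>. 0 < \<epsilon> \<Longrightarrow> \<epsilon> < \<epsilon>0 \<Longrightarrow> \<epsilon> \<le> setdist (frontier (D \<epsilon>)) (frontier \<Omega>)"
    and Ddist2: "\<And>\<epsilon>. 0 < \<epsilon> \<Longrightarrow> \<epsilon> < \<epsilon>0 \<Longrightarrow>
                   (\<forall>x\<in>frontier (D \<epsilon>). infdist x (frontier \<Omega>) \<le> lam * \<epsilon>)"
    and \<eta>: "smooth_fun \<eta>" "\<And>x. \<eta> x \<ge> 0" "(\<eta> has_integral 1) UNIV"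
           "closure {x. \<eta> x \<noteq> 0} = cball 0 1"
  shows "\<exists>C>0. \<forall>\<epsilon>. 0 < \<epsilon> \<and> \<epsilon> < \<epsilon>0 \<longrightarrow>
           (\<forall>x\<in>\<Omega>. infdist x (frontier \<Omega>) < (1 + lam) * \<epsilon> \<longrightarrow>
              (\<integral>\<^sup>+ y. ennreal (infdist y (frontier (D \<epsilon>)) powr (- s)
                     * ((1 / \<epsilon>) ^ DIM('a) * \<eta> ((1 / \<epsilon>) *\<^sub>R (x - y)))) \<partial>lborel)
              \<le> ennreal (C * \<epsilon> powr (- s)))"
proof -
  obtain \<rho> where \<rho>: "0 < \<rho>"
    and ext: "\<And>\<epsilon>. 0 < \<epsilon> \<Longrightarrow> \<epsilon> < \<epsilon>0 \<Longrightarrow> exterior_ball_radius (D \<epsilon>) \<rho>"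
    using Dball by blast
  have "{z. \<eta> z \<noteq> 0} \<subseteq> cball 0 1"
    using closure_subset[of "{z. \<eta> z \<noteq> 0}"] \<eta>(4) by simp
  then have \<eta>_supp: "\<eta> z = 0" if "z \<notin> cball 0 1" for z
    using that by blast
  obtain M where M: "0 < M" "\<And>z. \<eta> z \<le> M"
    using continuous_compact_support_bounded_above[OF smooth_fun_continuous[OF \<eta>(1)] compact_cball \<eta>_supp]
    by blast
  define K where "K = 32 * real DIM('a) ^ 2 * 4 ^ DIM('a) * (1 + 4 * real DIM('a) * \<epsilon>0 / \<rho>)"
  define C where "C = M * (2 ^ DIM('a) + K * 2 powr s / (1 - 2 powr (s - 1)))"
  have "2 powr (s - 1) < 2 powr 0"
    using s by (intro powr_less_mono) auto
  then have "0 < C"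
    using M(1) \<rho> \<epsilon>0 by (simp add: C_def K_def add_pos_nonneg)
  moreover have "(\<integral>\<^sup>+ y. ennreal (infdist y (frontier (D \<epsilon>)) powr (- s)
      * ((1 / \<epsilon>) ^ DIM('a) * \<eta> ((1 / \<epsilon>) *\<^sub>R (x - y)))) \<partial>lborel) \<le> ennreal (C * \<epsilon> powr (- s))"
    if "0 < \<epsilon>" "\<epsilon> < \<epsilon>0" for \<epsilon> x
    using nn_integral_mollified_infdist_powr_le[OF Dsmooth[OF that] ext[OF that] \<rho> that(1)
        less_imp_le[OF that(2)] s M(2) \<eta>_supp less_imp_le[OF M(1)], where x = x]
    by (simp add: C_def K_def)
  ultimately show ?thesis
    by blast
qed

end
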